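(* Let $H=\sum_{k=1}^{m}\mathbb{Z}u_{k}$ with $u_k\in\mathbb{R}^n$, labelled so that $u_1,\dots,u_p$ is a basis of $\mathrm{vect}(H)$. Then for every $P\in GL(n,\mathbb{R})$, $L(M_H)=L(M_{P(H)})$, where $M_{P(H)}$ is computed from the ordered generating family $(Pu_1,\dots,Pu_m)$ of $P(H)$. In particular $\widetilde{\mathrm{dim}}(\overline{H})=\widetilde{\mathrm{dim}}(\overline{P(H)})$.
   Context: $\mathrm{vect}(A)$ is the real span of $A$; bars denote closure. Complex dimension: for an additive subgroup $G$ of $\mathbb{R}^n$, $\widetilde{\mathrm{dim}}(G):=p+i(s-p)$, $p=\max\{\dim V: V\text{ a vector subspace},\ V\subset G\}$, $s=\dim\mathrm{vect}(G)$. Definition of $L(M_G)$ for an ordered generating family $w_1,\dots,w_m$ of $G$ whose first $q$ members form a basis of $\mathrm{vect}(G)$: for $k=q+1,\dots,m$ write $w_k=\sum_{j=1}^q\alpha_{k,j}w_j$. Choose $I_k\subset\{1,\dots,q\}$ such that $\{1\}\cup\{\alpha_{k,i}:i\in I_k\}$ is a longest sublist of $1,\alpha_{k,1},\dots,\alpha_{k,q}$ linearly independent over $\mathbb{Q}$. For $j\notin I_k$ write $\alpha_{k,j}=t_{k,j}+\sum_{i\in I_k}\gamma^{(k)}_{j,i}\alpha_{k,i}$ with rational $t_{k,j},\gamma^{(k)}_{j,i}$. Choose $N\in\mathbb{N}^*$ with $m^{(k)}_{i,j}:=N\gamma^{(k)}_{i,j}\in\mathbb{Z}$, and put $w'_{k,j}=Nw_j+\sum_{i\notin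 I_k}m^{(k)}_{i,j}w_i$ for $j\in I_k$. $M_G$ is the matrix with columns all $w'_{k,j}$, and $L(M_G)=\mathrm{rank}(M_G)$. *)

theory Defs
  imports "HOL-Analysis.Analysis"
begin

text \<open>vect(A) is the real span of A (library: span). Complex dimension of an
additive subgroup G of R^n.\<close>

definition max_sub_dim :: "('a::euclidean_space) set \<Rightarrow> nat" where
  "max_sub_dim G = Max {dim V | V. subspace V \<and> V \<subseteq> G}"

definition cdim :: "('a::euclidean_space) set \<Rightarrow> complex" where
  "cdim G = of_nat (max_sub_dim G) + \<i> * of_nat (dim (span G) - max_sub_dim G)"

definition zspan :: "(nat \<Rightarrow> 'a::real_vector) \<Rightarrow> nat \<Rightarrow> 'a set" where
  "zspan u m = {\<Sum>k\<in>{1..m}. of_int (c k) *\<^sub>R u k | c :: nat \<Rightarrow> int. True}"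

definition alpha :: "(nat \<Rightarrow> 'a::real_vector) \<Rightarrow> nat \<Rightarrow> nat \<Rightarrow> nat \<Rightarrow> real" where
  "alpha w q k = (THE a. (\<forall>j. j \<notin> {1..q} \<longrightarrow> a j = 0) \<and> w k = (\<Sum>j\<in>{1..q}. a j *\<^sub>R w j))"

definition Q_indep :: "(nat \<Rightarrow> real) \<Rightarrow> nat set \<Rightarrow> bool" where
  "Q_indep x S \<longleftrightarrow> (\<forall>c :: nat \<Rightarrow> rat. (\<Sum>i\<in>S. of_rat (c i) * x i) = 0 \<longrightarrow> (\<forall>i\<in>S. c i = 0))"

definition alist :: "(nat \<Rightarrow> nat \<Rightarrow> real) \<Rightarrow> nat \<Rightarrow> nat \<Rightarrow> real" where
  "alist a k i = (if i = 0 then 1 else a k i)"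

text \<open>Valid choices of I_k, N (allowed to depend on k), t_{k,j}, gamma^{(k)}_{j,i}.\<close>
definition valid_choice ::
  "(nat \<Rightarrow> nat \<Rightarrow> real) \<Rightarrow> nat \<Rightarrow> nat \<Rightarrow> (nat \<Rightarrow> nat set) \<Rightarrow> (nat \<Rightarrow> nat)
    \<Rightarrow> (nat \<Rightarrow> nat \<Rightarrow> nat \<Rightarrow> rat) \<Rightarrow> (nat \<Rightarrow> nat \<Rightarrow> rat) \<Rightarrow> bool" where
  "valid_choice a q m I N \<gamma> t \<longleftrightarrow>
    (\<forall>k\<in>{q+1..m}.
       I k \<subseteq> {1..q} \<and>
       Q_indep (alist a k) (insert 0 (I k)) \<and>
       (\<forall>S. S \<subseteq> {0..q} \<and> Q_indep (alist a k) S \<longrightarrow> card S \<le> card (insert 0 (I k))) \<and>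
       (\<forall>j\<in>{1..q} - I k. a k j = of_rat (t k j) + (\<Sum>i\<in>I k. of_rat (\<gamma> k j i) * a k i)) \<and>
       N k > 0 \<and>
       (\<forall>j\<in>{1..q} - I k. \<forall>i\<in>I k. of_nat (N k) * \<gamma> k j i \<in> \<int>))"

definition Lchoice :: "(nat \<Rightarrow> nat \<Rightarrow> real) \<Rightarrow> nat \<Rightarrow> nat \<Rightarrow>
    (nat \<Rightarrow> nat set) \<times> (nat \<Rightarrow> nat) \<times> (nat \<Rightarrow> nat \<Rightarrow> nat \<Rightarrow> rat) \<times> (nat \<Rightarrow> nat \<Rightarrow> rat)" where
  "Lchoice a q m = (SOME (I, N, \<gamma>, t). valid_choice a q m I N \<gamma> t)"

text \<open>Columns w'_{k,j} = N w_j + sum_{i not in I_k} m^{(k)}_{i,j} w_i, with m^{(k)}_{i,j} = N gamma^{(k)}_{i,j}.\<close>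
definition Mcols :: "(nat \<Rightarrow> 'a::real_vector) \<Rightarrow> nat \<Rightarrow> nat \<Rightarrow> 'a set" where
  "Mcols w q m = (case Lchoice (alpha w q) q m of (I, N, \<gamma>, t) \<Rightarrow>
     {of_nat (N k) *\<^sub>R w j + (\<Sum>i\<in>{1..q} - I k. of_rat (of_nat (N k) * \<gamma> k i j) *\<^sub>R w i)
       | k j. k \<in> {q+1..m} \<and> j \<in> I k})"

text \<open>L(M_G) = rank of the matrix whose columns are the w'_{k,j} (= dim of their span).\<close>
definition L_M :: "(nat \<Rightarrow> 'a::euclidean_space) \<Rightarrow> nat \<Rightarrow> nat \<Rightarrow> nat" where
  "L_M w q m = dim (span (Mcols w q m))"

end

theory Submission
  imports Defs
begin

text \<open>Every ingredient of \<open>L(M_G)\<close> is read off the coordinates \<open>\<alpha>\<^sub>k\<^sub>,\<^sub>j\<close> of \<open>w\<^sub>k\<close> in the basis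
\<open>w\<^sub>1, \<dots>, w\<^sub>q\<close>, and an injective linear map \<open>f\<close> does not change these coordinates. Hence the
choices of \<open>I\<^sub>k\<close>, \<open>N\<close>, \<open>\<gamma>\<close> coincide for \<open>w\<close> and \<open>f \<circ> w\<close>, the columns of \<open>M\<close> for \<open>f \<circ> w\<close> are
the images under \<open>f\<close> of those for \<open>w\<close>, and the rank is preserved. Likewise \<open>f\<close> maps the
subspaces contained in \<open>G\<close> bijectively and dimension-preservingly onto those contained in
\<open>f(G)\<close>, so it preserves the complex dimension; and closure commutes with \<open>f\<close>.\<close>

lemma alpha_linear_image:
  assumes "linear f" "inj f"
  shows "alpha (\<lambda>k. f (w k)) q = alpha w q"
proof -
  have "f (w k) = (\<Sum>j\<in>{1..q}. a j *\<^sub>R f (w j)) \<longleftrightarrow> w k = (\<Sum>j\<in>{1..q}. a j *\<^sub>R w j)" for k a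
    using assms by (simp add: linear_sum linear_scale flip: inj_eq)
  then show ?thesis
    unfolding alpha_def by simp
qed

lemma Mcols_linear_image:
  assumes "linear f" "inj f"
  shows "Mcols (\<lambda>k. f (w k)) q m = f ` Mcols w q m"
proof -
  obtain I N \<gamma> t where choice: "Lchoice (alpha w q) q m = (I, N, \<gamma>, t)"
    by (metis prod_cases4)
  have column: "f (of_nat (N k) *\<^sub>R w j + (\<Sum>i\<in>{1..q} - I k. of_rat (of_nat (N k) * \<gamma> k i j) *\<^sub>R w i))
      = of_nat (N k) *\<^sub>R f (w j) + (\<Sum>i\<in>{1..q} - I k. of_rat (of_nat (N k) * \<gamma> k i j) *\<^sub>R f (w i))"
    for k j
    using assms(1) by (simp add: linear_add linear_sum linear_scale)
  have image_Collect2: "f ` {g k j | k j. Q k j} = {f (g k j) | k j. Q k j}" for g Q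
    by blast
  show ?thesis
    unfolding Mcols_def alpha_linear_image[OF assms] choice prod.case image_Collect2 column ..
qed

lemma L_M_linear_image:
  assumes "linear f" "inj f"
  shows "L_M (\<lambda>k. f (w k)) q m = L_M w q m"
  using dim_image_eq[OF assms(1) inj_on_subset[OF assms(2) subset_UNIV]]
  unfolding L_M_def Mcols_linear_image[OF assms] by simp

lemma subspace_in_linear_image:
  assumes "linear f" "inj f" "subspace V" "V \<subseteq> f ` G"
  obtains U where "subspace U" "U \<subseteq> G" "V = f ` U"
proof
  show "subspace (f -` V)"
    using assms(1,3) by (rule linear_subspace_vimage)
  show "f -` V \<subseteq> G"
    using assms(2,4) by (auto dest: injD)
  show "V = f ` (f -` V)"
    using assms(4) by blast
qed

lemma max_sub_dim_linear_image:
  assumes "linear f" "inj f"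
  shows "max_sub_dim (f ` G) = max_sub_dim G"
proof -
  have dim_f: "dim (f ` U) = dim U" for U
    using dim_image_eq[OF assms(1) inj_on_subset[OF assms(2) subset_UNIV]] .
  have "{dim V | V. subspace V \<and> V \<subseteq> f ` G} = {dim (f ` U) | U. subspace U \<and> U \<subseteq> G}"
  proof (intro set_eqI iffI)
    fix d assume "d \<in> {dim V | V. subspace V \<and> V \<subseteq> f ` G}"
    then obtain V where "d = dim V" "subspace V" "V \<subseteq> f ` G"
      by blast
    moreover from assms this(2,3) obtain U where "subspace U" "U \<subseteq> G" "V = f ` U"
      by (rule subspace_in_linear_image)
    ultimately show "d \<in> {dim (f ` U) | U. subspace U \<and> U \<subseteq> G}"
      by blast
  next
    fix d assume "d \<in> {dim (f ` U) | U. subspace U \<and> U \<subseteq> G}"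
    then obtain U where "d = dim (f ` U)" "subspace U" "U \<subseteq> G"
      by blast
    then show "d \<in> {dim V | V. subspace V \<and> V \<subseteq> f ` G}"
      using assms(1) linear_subspace_image by blast
  qed
  then show ?thesis
    unfolding max_sub_dim_def dim_f by simp
qed

lemma cdim_linear_image:
  assumes "linear f" "inj f"
  shows "cdim (f ` G) = cdim G"
  using max_sub_dim_linear_image[OF assms]
    dim_image_eq[OF assms(1) inj_on_subset[OF assms(2) subset_UNIV]]
  unfolding cdim_def by simp

theorem lemma3p3:
  fixes u :: "nat \<Rightarrow> real^'n" and m p :: nat and P :: "real^'n^'n"
  assumes "p \<le> m"
    and "inj_on u {1..p}"
    and "independent (u ` {1..p})"
    and "span (u ` {1..p}) = span (zspan u m)"
    and "invertible P"
  shows "L_M u p m = L_M (\<lambda>k. P *v u k) p m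
    \<and> cdim (closure (zspan u m)) = cdim (closure ((\<lambda>x. P *v x) ` zspan u m))"
proof -
  have lin: "linear ((*v) P)"
    by (rule matrix_vector_mul_linear)
  have inj: "inj ((*v) P)"
    using assms(5) by (rule inj_matrix_vector_mult)
  have "closure ((*v) P ` zspan u m) = (*v) P ` closure (zspan u m)"
    using closure_injective_linear_image[OF lin inj] by simp
  then show ?thesis
    using L_M_linear_image[OF lin inj] cdim_linear_image[OF lin inj] by simp
qed

end
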